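(* Fix $m \ge 2$, a concept index $j \in [m]$, and write $-j = [m]\setminus\{j\}$. Let $(\hat Y^{(t)}, Z_j^{(t)}, Z_{-j}^{(t)})$, $t = 1,2,\dots$, be i.i.d. draws from a joint distribution $P_{\hat Y Z_j Z_{-j}}$ on $\mathbb{R}\times\mathbb{R}\times\mathbb{R}^{m-1}$, and for each $t$ let $\tilde Z_j^{(t)}$ be drawn from the conditional distribution $P_{Z_j \mid Z_{-j} = Z_{-j}^{(t)}}$, independently of everything else given $Z_{-j}^{(t)}$. Let $k_{Y}, k_{j}, k_{-j}$ be bounded positive-definite kernels on $\mathbb{R}, \mathbb{R}, \mathbb{R}^{m-1}$, let $\rho_1 \equiv 0$ and for $t \ge 2$ $$\rho_t(y, z_j, z_{-j}) = \frac{1}{t-1}\sum_{t'=1}^{t-1} k_Y(\hat Y^{(t')}, y)\,k_{-j}(Z_{-j}^{(t')}, z_{-j})\Big[k_j(Z_j^{(t')}, z_j) - k_j(\tilde Z_j^{(t')}, z_j)\Big],$$ and define the payoff $\kappa_t = \tanh\big(\rho_t(\hat Y^{(t)}, Z_j^{(t)}, Z_{-j}^{(t)}) - \rho_t(\hat Y^{(t)}, \tilde Z_j^{(t)}, Z_{-j}^{(t)})\big)$. Let $\mathcal{F}_{t-1}$ be the $\sigma$-algebra generated by all observations and samples up to time $t-1$, let $v_t \in [-1,1]$ be $\mathcal{F}_{t-1}$-measurable betting fractions, and define the wealth $K_0 = 1$, $K_t = K_{t-1}(1 + v_t\kappa_t)$. If the null hypothesis $H^{\mathrm{GC}}_{0,j}:\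 \hat Y \perp\!\!\!\perp Z_j \mid Z_{-j}$ holds, then $\mathbb{E}[\kappa_t \mid \mathcal{F}_{t-1}] = 0$ for all $t \ge 1$, and consequently for every $\alpha \in (0,1)$, $\mathbb{P}[\exists t \geq 1 : K_t \geq 1/\alpha] \leq \alpha$.
   Context: Setting: $\hat Y$ is the (scalar) output of a fixed model for one class, and $Z = (Z_1,\dots,Z_m)$ is a vector of semantic concept values. $H^{\mathrm{GC}}_{0,j}$ is the global conditional semantic independence null hypothesis, equivalently $P_{\hat Y Z_j Z_{-j}} = P_{\hat Y \tilde Z_j Z_{-j}}$ with $\tilde Z_j \sim P_{Z_j\mid Z_{-j}}$. The function $\rho_t$ is the plug-in estimate (from data up to time $t-1$) of the MMD witness between these two distributions in the tensor-product RKHS. *)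

theory Defs
  imports "HOL-Probability.Probability"
begin

definition pd_kernel :: "('b \<Rightarrow> 'b \<Rightarrow> real) \<Rightarrow> bool" where
  "pd_kernel k \<longleftrightarrow> (\<forall>x y. k x y = k y x) \<and>
     (\<forall>(n::nat) (c::nat \<Rightarrow> real) (xs::nat \<Rightarrow> 'b).
        0 \<le> (\<Sum>i<n. \<Sum>l<n. c i * c l * k (xs i) (xs l)))"

definition bounded_kernel :: "('b \<Rightarrow> 'b \<Rightarrow> real) \<Rightarrow> bool" where
  "bounded_kernel k \<longleftrightarrow> (\<exists>B. \<forall>x y. \<bar>k x y\<bar> \<le> B)"

text \<open>Law of (Y, Z_j~, Z_{-j}) where Z_j~ is drawn from the Markov kernel Kc at Z_{-j},
  starting from the law P of (Y, Z_j, Z_{-j}).\<close>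
definition resample_law ::
  "(real \<times> real \<times> 'z::topological_space) measure \<Rightarrow> ('z \<Rightarrow> real measure) \<Rightarrow> (real \<times> real \<times> 'z \<times> real) measure" where
  "resample_law P Kc = P \<bind> (\<lambda>(y, zj, zm). distr (Kc zm) borel (\<lambda>z. (y, zj, zm, z)))"

definition is_cond_distr :: "(real \<times> real \<times> 'z::topological_space) measure \<Rightarrow> ('z \<Rightarrow> real measure) \<Rightarrow> bool" where
  "is_cond_distr P Kc \<longleftrightarrow> Kc \<in> borel \<rightarrow>\<^sub>M prob_algebra borel \<and>
     distr P borel (\<lambda>(y, zj, zm). (zj, zm)) =
       distr P borel (\<lambda>(y, zj, zm). zm) \<bind> (\<lambda>zm. distr (Kc zm) borel (\<lambda>z. (z, zm)))"

text \<open>Global conditional semantic independence null H^GC_{0,j}, in the form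
  P_{Y Z_j Z_{-j}} = P_{Y Z_j~ Z_{-j}} with Z_j~ ~ P_{Z_j | Z_{-j}}.\<close>
definition H0_GC :: "(real \<times> real \<times> 'z::topological_space) measure \<Rightarrow> ('z \<Rightarrow> real measure) \<Rightarrow> bool" where
  "H0_GC P Kc \<longleftrightarrow> P = P \<bind> (\<lambda>(y, zj, zm). distr (Kc zm) borel (\<lambda>z. (y, z, zm)))"

definition rho ::
  "(nat \<Rightarrow> 'a \<Rightarrow> real) \<Rightarrow> (nat \<Rightarrow> 'a \<Rightarrow> real) \<Rightarrow> (nat \<Rightarrow> 'a \<Rightarrow> 'z) \<Rightarrow> (nat \<Rightarrow> 'a \<Rightarrow> real) \<Rightarrow>
   (real \<Rightarrow> real \<Rightarrow> real) \<Rightarrow> (real \<Rightarrow> real \<Rightarrow> real) \<Rightarrow> ('z \<Rightarrow> 'z \<Rightarrow> real) \<Rightarrow>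
   nat \<Rightarrow> 'a \<Rightarrow> real \<Rightarrow> real \<Rightarrow> 'z \<Rightarrow> real" where
  "rho Y Zj Zm Zt kY kj km t \<omega> y zj zm =
     (if t \<le> 1 then 0 else
        (1 / real (t - 1)) * (\<Sum>s\<in>{1..t-1}.
           kY (Y s \<omega>) y * km (Zm s \<omega>) zm * (kj (Zj s \<omega>) zj - kj (Zt s \<omega>) zj)))"

definition kappa ::
  "(nat \<Rightarrow> 'a \<Rightarrow> real) \<Rightarrow> (nat \<Rightarrow> 'a \<Rightarrow> real) \<Rightarrow> (nat \<Rightarrow> 'a \<Rightarrow> 'z) \<Rightarrow> (nat \<Rightarrow> 'a \<Rightarrow> real) \<Rightarrow>
   (real \<Rightarrow> real \<Rightarrow> real) \<Rightarrow> (real \<Rightarrow> real \<Rightarrow> real) \<Rightarrow> ('z \<Rightarrow> 'z \<Rightarrow> real) \<Rightarrow>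
   nat \<Rightarrow> 'a \<Rightarrow> real" where
  "kappa Y Zj Zm Zt kY kj km t \<omega> =
     tanh (rho Y Zj Zm Zt kY kj km t \<omega> (Y t \<omega>) (Zj t \<omega>) (Zm t \<omega>)
         - rho Y Zj Zm Zt kY kj km t \<omega> (Y t \<omega>) (Zt t \<omega>) (Zm t \<omega>))"

definition filt ::
  "'a measure \<Rightarrow> (nat \<Rightarrow> 'a \<Rightarrow> 'b::topological_space) \<Rightarrow> nat \<Rightarrow> 'a measure" where
  "filt M W n = sigma (space M) (\<Union>t\<in>{1..n}. {W t -` A \<inter> space M | A. A \<in> sets borel})"

fun wealth :: "(nat \<Rightarrow> 'a \<Rightarrow> real) \<Rightarrow> (nat \<Rightarrow> 'a \<Rightarrow> real) \<Rightarrow> nat \<Rightarrow> 'a \<Rightarrow> real" where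
  "wealth v k 0 \<omega> = 1"
| "wealth v k (Suc n) \<omega> = wealth v k n \<omega> * (1 + v (Suc n) \<omega> * k (Suc n) \<omega>)"

end

theory Submission
  imports Defs
begin

text \<open>
  Under the null hypothesis an observation \<open>(Y, Zj, Zm, Zt)\<close> has the same law as
  \<open>(Y, Zt, Zm, Zj)\<close>: given \<open>(Y, Zm)\<close>, both the concept value \<open>Zj\<close> and its resample \<open>Zt\<close> are
  independent draws from \<open>Kc Zm\<close>. The payoff \<open>\<kappa> t\<close> is a function of the past observations and
  of the fresh one which changes sign under this swap; since the fresh observation is independent
  of the past, \<open>\<kappa> t\<close> has conditional mean zero. Betting predictable fractions in \<open>[-1, 1]\<close> of the
  wealth on such a fair game keeps the wealth nonnegative with mean one, also when one stops
  betting as soon as the wealth has reached \<open>1/\<alpha>\<close>; Markov's inequality for this stopped wealth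
  gives Ville's inequality.
\<close>

section \<open>Exchangeability of the resampled concept value\<close>

lemma bind_distr_exchange:
  assumes K: "prob_space K" and f: "(\<lambda>(a, b). f a b) \<in> K \<Otimes>\<^sub>M K \<rightarrow>\<^sub>M N"
  shows "K \<bind> (\<lambda>a. distr K N (f a)) = K \<bind> (\<lambda>b. distr K N (\<lambda>a. f a b))"
proof -
  interpret pair_prob_space K K
    using K by (simp add: pair_prob_space_def pair_sigma_finite_def prob_space_imp_sigma_finite)
  have f1: "f a \<in> K \<rightarrow>\<^sub>M N" and f2: "(\<lambda>b. f b a) \<in> K \<rightarrow>\<^sub>M N" if "a \<in> space K" for a
    using measurable_compose[OF measurable_Pair1'[OF that] f] measurable_compose[OF measurable_Pair2'[OF that] f]
    by simp_all
  have "K \<bind> (\<lambda>a. distr K N (f a)) = K \<bind> (\<lambda>a. K \<bind> (\<lambda>b. return N (f a b)))"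
    by (intro bind_cong refl bind_return_distr'[symmetric] f1) (simp_all add: M1.not_empty)
  also have "\<dots> = K \<bind> (\<lambda>b. K \<bind> (\<lambda>a. return N (f a b)))"
    by (rule bind_rotate) (use measurable_compose[OF f return_measurable] in \<open>simp add: case_prod_beta'\<close>)
  also have "\<dots> = K \<bind> (\<lambda>b. distr K N (\<lambda>a. f a b))"
    by (intro bind_cong refl bind_return_distr' f2) (simp_all add: M1.not_empty)
  finally show ?thesis .
qed

definition swap_resampled :: "'y \<times> 'c \<times> 'z \<times> 'c \<Rightarrow> 'y \<times> 'c \<times> 'z \<times> 'c" where
  "swap_resampled = (\<lambda>(y, zj, zm, zt). (y, zt, zm, zj))"

lemma swap_resampled_measurable:
  "swap_resampled \<in> (borel :: ('y::second_countable_topology \<times> 'c::second_countable_topology \<times>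
     'z::second_countable_topology \<times> 'c) measure) \<rightarrow>\<^sub>M borel"
  unfolding swap_resampled_def case_prod_beta'
  by (intro borel_measurable_continuous_onI continuous_intros)

lemma distr_swap_resampled_bind:
  fixes K :: "real measure" and y :: real and zm :: "'z::second_countable_topology"
  assumes K_space: "K \<in> space (prob_algebra borel)"
  defines "L \<equiv> K \<bind> (\<lambda>a. distr K borel (\<lambda>b. (y, a, zm, b)))"
  shows "distr L borel swap_resampled = L"
proof -
  have K: "prob_space K" "sets K = sets borel"
    using K_space by (simp_all add: space_prob_algebra)
  then have space_K: "space K \<noteq> {}"
    using prob_space.not_empty by blast
  have K_sets: "sets (K \<Otimes>\<^sub>M K) = sets (borel \<Otimes>\<^sub>M borel)" "sets (K \<Otimes>\<^sub>M borel) = sets (borel \<Otimes>\<^sub>M borel)"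
    by (simp_all add: sets_pair_measure_cong[OF K(2)] K(2))
  have pair_meas: "(\<lambda>(a, b). (y, a, zm, b)) \<in> K \<Otimes>\<^sub>M borel \<rightarrow>\<^sub>M (borel :: (real \<times> real \<times> 'z \<times> real) measure)"
    "(\<lambda>(a, b). (y, b, zm, a)) \<in> K \<Otimes>\<^sub>M K \<rightarrow>\<^sub>M borel"
    unfolding measurable_cong_sets[OF K_sets(1) refl] measurable_cong_sets[OF K_sets(2) refl] case_prod_beta'
    by (auto simp: borel_prod intro!: borel_measurable_continuous_onI continuous_intros)
  have slice_meas: "(\<lambda>b. (y, a, zm, b)) \<in> K \<rightarrow>\<^sub>M borel" for a
    unfolding measurable_cong_sets[OF K(2) refl]
    by (auto intro!: borel_measurable_continuous_onI continuous_intros)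
  have "distr L borel swap_resampled
      = K \<bind> (\<lambda>a. distr (distr K borel (\<lambda>b. (y, a, zm, b))) borel swap_resampled)"
    unfolding L_def
    by (rule distr_bind[OF measurable_prob_algebraD space_K swap_resampled_measurable])
       (rule measurable_distr_prob_space2[OF measurable_const[OF K_space] pair_meas(1)])
  also have "\<dots> = K \<bind> (\<lambda>a. distr K borel (\<lambda>b. (y, b, zm, a)))"
    by (intro bind_cong refl, subst distr_distr[OF swap_resampled_measurable slice_meas])
       (simp add: comp_def swap_resampled_def)
  also have "\<dots> = L"
    using bind_distr_exchange[OF K(1) pair_meas(2)] by (simp add: L_def)
  finally show ?thesis .
qed

lemma distr_resample_law_swap:
  fixes P :: "(real \<times> real \<times> 'z::second_countable_topology) measure"
  assumes sets_P: "sets P = sets borel" and Kc: "Kc \<in> borel \<rightarrow>\<^sub>M prob_algebra borel"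
    and null: "H0_GC P Kc"
  shows "distr (resample_law P Kc) borel swap_resampled = resample_law P Kc"
proof -
  define f where "f = (\<lambda>(y::real, zj::real, zm). distr (Kc zm) borel (\<lambda>z. (y, z, zm)))"
  define g where "g = (\<lambda>(y::real, zj::real, zm). distr (Kc zm) borel (\<lambda>z. (y, zj, zm, z)))"
  have f_meas: "f \<in> P \<rightarrow>\<^sub>M subprob_algebra borel"
    unfolding f_def measurable_cong_sets[OF sets_P refl] case_prod_beta'
    by (intro measurable_prob_algebraD measurable_distr_prob_space2[where M=borel] measurable_compose[OF _ Kc])
       (auto simp: borel_prod case_prod_beta' intro!: borel_measurable_continuous_onI continuous_intros)
  have g_meas: "g \<in> borel \<rightarrow>\<^sub>M subprob_algebra borel"
    unfolding g_def case_prod_beta'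
    by (intro measurable_prob_algebraD measurable_distr_prob_space2[where M=borel] measurable_compose[OF _ Kc])
       (auto simp: borel_prod case_prod_beta' intro!: borel_measurable_continuous_onI continuous_intros)
  \<comment> \<open>The null hypothesis \<open>P = P \<bind> f\<close> redraws \<open>Zj\<close> from \<open>Kc Zm\<close>, so that both concept values
    become independent draws from the same kernel.\<close>
  have "resample_law P Kc = (P \<bind> f) \<bind> g"
    using null unfolding resample_law_def H0_GC_def f_def g_def by simp
  also have "\<dots> = P \<bind> (\<lambda>p. f p \<bind> g)"
    by (rule bind_assoc[OF f_meas g_meas])
  finally have law: "resample_law P Kc = P \<bind> (\<lambda>p. f p \<bind> g)" .
  have symmetric: "distr (f p \<bind> g) borel swap_resampled = f p \<bind> g" for p
  proof -
    obtain y zj zm where p: "p = (y, zj, zm)" by (cases p) auto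
    have K_space: "Kc zm \<in> space (prob_algebra borel)"
      using measurable_space[OF Kc] by simp
    then have K: "sets (Kc zm) = sets borel" "space (Kc zm) \<noteq> {}"
      by (auto simp: space_prob_algebra prob_space.not_empty)
    have slice: "(\<lambda>a. (y, a, zm)) \<in> Kc zm \<rightarrow>\<^sub>M borel"
      unfolding measurable_cong_sets[OF K(1) refl] by (intro borel_measurable_continuous_onI continuous_intros)
    have "f p \<bind> g = Kc zm \<bind> (\<lambda>a. g (y, a, zm))"
      unfolding p f_def using bind_distr[OF slice g_meas K(2)] by simp
    then show ?thesis
      using distr_swap_resampled_bind[OF K_space] by (simp add: g_def)
  qed
  have "distr (resample_law P Kc) borel swap_resampled = P \<bind> (\<lambda>p. distr (f p \<bind> g) borel swap_resampled)"
    unfolding law using sets_eq_imp_space_eq[OF sets_P]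
    by (intro distr_bind[OF measurable_bind2[OF f_meas g_meas] _ swap_resampled_measurable]) auto
  then show ?thesis unfolding symmetric law .
qed

section \<open>The observation filtration\<close>

definition history :: "(nat \<Rightarrow> 'a \<Rightarrow> 'b) \<Rightarrow> nat \<Rightarrow> 'a \<Rightarrow> nat \<Rightarrow> 'b" where
  "history W n \<omega> = restrict (\<lambda>s. W s \<omega>) {1..n}"

lemma space_filt [simp]: "space (filt M W n) = space M"
  by (simp add: filt_def space_measure_of_conv)

context
  fixes M :: "'a measure" and W :: "nat \<Rightarrow> 'a \<Rightarrow> 'b::topological_space"
  assumes W_meas: "\<And>t. 1 \<le> t \<Longrightarrow> W t \<in> M \<rightarrow>\<^sub>M borel"
begin

lemma sets_filt:
  "sets (filt M W n) = sigma_sets (space M) (\<Union>t\<in>{1..n}. {W t -` A \<inter> space M | A. A \<in> sets borel})"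
  unfolding filt_def by (rule sets_measure_of) auto

lemma subalgebra_filt: "subalgebra M (filt M W n)"
  unfolding subalgebra_def sets_filt
  using W_meas by (auto intro!: sets.sigma_sets_subset measurable_sets)

lemma subalgebra_filt_mono:
  assumes "m \<le> n" shows "subalgebra (filt M W n) (filt M W m)"
  unfolding subalgebra_def sets_filt space_filt
  using assms by (intro conjI refl sigma_sets_subseteq UN_mono) auto

lemma measurable_filt: "1 \<le> s \<Longrightarrow> s \<le> n \<Longrightarrow> W s \<in> filt M W n \<rightarrow>\<^sub>M borel"
  by (rule measurableI) (auto simp: sets_filt intro!: sigma_sets.Basic bexI[of _ s] exI)

lemma measurable_history_filt:
  "m \<le> n \<Longrightarrow> history W m \<in> filt M W n \<rightarrow>\<^sub>M PiM {1..m} (\<lambda>_. borel)"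
  unfolding history_def by (intro measurable_restrict measurable_filt) auto

lemma filt_sets_vimage_history:
  assumes "A \<in> sets (filt M W n)"
  obtains B where "B \<in> sets (PiM {1..n} (\<lambda>_. borel))" "A = history W n -` B \<inter> space M"
proof -
  let ?N = "PiM {1..n} (\<lambda>_. borel :: 'b measure)"
  have hist_space: "history W n \<in> space M \<rightarrow> space ?N"
    using W_meas by (auto simp: history_def space_PiM measurable_space)
  let ?V = "vimage_algebra (space M) (history W n) ?N"
  have "sigma_sets (space ?V) (\<Union>t\<in>{1..n}. {W t -` A \<inter> space M | A. A \<in> sets borel}) \<subseteq> sets ?V"
  proof (rule sets.sigma_sets_subset, safe)
    fix s A assume s: "s \<in> {1..n}" and A: "A \<in> sets (borel :: 'b measure)"
    have "W s -` A \<inter> space M = history W n -` ((\<lambda>x. x s) -` A \<inter> space ?N) \<inter> space M"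
      using hist_space s by (auto simp: history_def)
    then show "W s -` A \<inter> space M \<in> sets ?V"
      unfolding sets_vimage_algebra2[OF hist_space]
      using measurable_sets[OF measurable_component_singleton[OF s] A] by blast
  qed
  then show ?thesis
    using assms that unfolding sets_vimage_algebra2[OF hist_space] sets_filt by auto
qed

end

section \<open>An antisymmetric function of a fresh observation is a fair payoff\<close>

lemma (in prob_space) sigma_finite_subalgebraI:
  "subalgebra M F \<Longrightarrow> sigma_finite_subalgebra M F"
  by (intro finite_measure_subalgebra_is_sigma_finite)
     (simp add: finite_measure_subalgebra_def finite_measure_subalgebra_axioms_def finite_measure_axioms)

lemma (in prob_space) integral_indep_antisymmetric_eq_0:
  fixes H :: "'x \<Rightarrow> 'x \<Rightarrow> real"
  assumes ind: "indep_var N X N' V"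
    and S: "S \<in> N' \<rightarrow>\<^sub>M N'" and law: "distr M N' (\<lambda>\<omega>. S (V \<omega>)) = distr M N' V"
    and H: "(\<lambda>(x, y). H x y) \<in> borel_measurable (N \<Otimes>\<^sub>M N')"
    and anti: "\<And>x y. H x (S y) = - H x y"
  shows "(\<integral>\<omega>. H (X \<omega>) (V \<omega>) \<partial>M) = 0"
proof -
  have X: "X \<in> M \<rightarrow>\<^sub>M N" and V: "V \<in> M \<rightarrow>\<^sub>M N'"
    using ind by (auto simp: indep_var_distribution_eq)
  have ind_S: "indep_var N X N' (\<lambda>\<omega>. S (V \<omega>))"
    using indep_var_compose[OF ind measurable_ident S] by (simp add: comp_def)
  have H': "(\<lambda>p. H (fst p) (snd p)) \<in> borel_measurable (N \<Otimes>\<^sub>M N')"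
    using H by (simp add: case_prod_beta')
  have "(\<integral>\<omega>. H (X \<omega>) (V \<omega>) \<partial>M) = (\<integral>p. H (fst p) (snd p) \<partial>distr M (N \<Otimes>\<^sub>M N') (\<lambda>\<omega>. (X \<omega>, V \<omega>)))"
    by (simp add: integral_distr[OF measurable_Pair[OF X V] H'])
  also have "\<dots> = (\<integral>p. H (fst p) (snd p) \<partial>(distr M N X \<Otimes>\<^sub>M distr M N' V))"
    using ind by (simp add: indep_var_distribution_eq)
  also have "\<dots> = (\<integral>p. H (fst p) (snd p) \<partial>(distr M N X \<Otimes>\<^sub>M distr M N' (\<lambda>\<omega>. S (V \<omega>))))"
    by (simp add: law)
  also have "\<dots> = (\<integral>p. H (fst p) (snd p) \<partial>distr M (N \<Otimes>\<^sub>M N') (\<lambda>\<omega>. (X \<omega>, S (V \<omega>))))"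
    using ind_S by (simp add: indep_var_distribution_eq)
  also have "\<dots> = (\<integral>\<omega>. - H (X \<omega>) (V \<omega>) \<partial>M)"
    by (simp add: integral_distr[OF measurable_Pair[OF X measurable_compose[OF V S]] H'] anti)
  finally show ?thesis by simp
qed

lemma distr_restrict_singleton_eq:
  fixes X :: "'a \<Rightarrow> 'b"
  assumes X: "X \<in> M \<rightarrow>\<^sub>M N" and S: "S \<in> N \<rightarrow>\<^sub>M N" and law: "distr M N (\<lambda>\<omega>. S (X \<omega>)) = distr M N X"
  shows "distr M (PiM {t} (\<lambda>_. N)) (\<lambda>\<omega>. restrict (\<lambda>_. S (X \<omega>)) {t})
       = distr M (PiM {t} (\<lambda>_. N)) (\<lambda>\<omega>. restrict (\<lambda>_. X \<omega>) {t})"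
proof -
  let ?emb = "\<lambda>x :: 'b. restrict (\<lambda>_. x) {t}"
  have emb: "?emb \<in> N \<rightarrow>\<^sub>M PiM {t} (\<lambda>_. N)"
    by (intro measurable_restrict) auto
  have "distr M (PiM {t} (\<lambda>_. N)) (?emb \<circ> (\<lambda>\<omega>. S (X \<omega>)))
      = distr (distr M N (\<lambda>\<omega>. S (X \<omega>))) (PiM {t} (\<lambda>_. N)) ?emb"
    by (rule distr_distr[OF emb measurable_compose[OF X S], symmetric])
  also have "\<dots> = distr M (PiM {t} (\<lambda>_. N)) (?emb \<circ> X)"
    unfolding law by (rule distr_distr[OF emb X])
  finally show ?thesis by (simp add: comp_def)
qed

lemma (in prob_space) integral_history_antisymmetric_eq_0:
  fixes W :: "nat \<Rightarrow> 'a \<Rightarrow> 'b::topological_space" and h :: "(nat \<Rightarrow> 'b) \<Rightarrow> real"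
  assumes indep: "indep_vars (\<lambda>_. borel) W {1..}" and "1 \<le> t"
    and S: "S \<in> borel \<rightarrow>\<^sub>M borel" and law: "distr M borel (\<lambda>\<omega>. S (W t \<omega>)) = distr M borel (W t)"
    and h: "h \<in> borel_measurable (PiM {1..t} (\<lambda>_. borel))"
    and anti: "\<And>x. h (x(t := S (x t))) = - h x"
    and B: "B \<in> sets (PiM {1..t - 1} (\<lambda>_. borel))"
  shows "(\<integral>\<omega>. indicator B (history W (t - 1) \<omega>) * h (history W t \<omega>) \<partial>M) = 0"
proof -
  \<comment> \<open>\<open>indep_var\<close> compares variables with values in the same type, so the fresh observation is
    packaged as a function on \<open>{t}\<close>.\<close>
  define I where "I = {1..t - 1}"
  define V where "V \<omega> = restrict (\<lambda>i. W i \<omega>) {t}" for \<omega>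
  define S' where "S' f = restrict (\<lambda>i. S (f i)) {t}" for f :: "nat \<Rightarrow> 'b"
  define H where "H x f = indicator B x * h (merge I {t} (x, f))" for x f
  have I: "I \<inter> {t} = {}" "I \<union> {t} = {1..t}"
    using \<open>1 \<le> t\<close> by (auto simp: I_def)
  have ind: "indep_var (PiM I (\<lambda>_. borel)) (history W (t - 1)) (PiM {t} (\<lambda>_. borel)) V"
    unfolding history_def[abs_def] V_def I_def
    by (rule indep_var_restrict[OF indep]) (use \<open>1 \<le> t\<close> in auto)
  have S'_meas: "S' \<in> PiM {t} (\<lambda>_. borel) \<rightarrow>\<^sub>M PiM {t} (\<lambda>_. borel)"
    unfolding S'_def using S by (intro measurable_restrict) auto
  have "W t \<in> M \<rightarrow>\<^sub>M borel"
    using indep \<open>1 \<le> t\<close> by (auto simp: indep_vars_def)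
  moreover have "V = (\<lambda>\<omega>. restrict (\<lambda>_. W t \<omega>) {t})" "(\<lambda>\<omega>. S' (V \<omega>)) = (\<lambda>\<omega>. restrict (\<lambda>_. S (W t \<omega>)) {t})"
    by (auto simp: V_def S'_def fun_eq_iff)
  ultimately have law_V: "distr M (PiM {t} (\<lambda>_. borel)) (\<lambda>\<omega>. S' (V \<omega>)) = distr M (PiM {t} (\<lambda>_. borel)) V"
    using distr_restrict_singleton_eq[OF _ S law] by simp
  have H_meas: "(\<lambda>(x, f). H x f) \<in> borel_measurable (PiM I (\<lambda>_. borel) \<Otimes>\<^sub>M PiM {t} (\<lambda>_. borel))"
    unfolding H_def case_prod_beta' using measurable_compose[OF measurable_merge[of I "{t}"], of h] h I(2) B
    by (simp add: I_def)
  have "merge I {t} (x, S' f) = (merge I {t} (x, f))(t := S (merge I {t} (x, f) t))" for x f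
    using I(1) by (auto simp: merge_def S'_def fun_eq_iff)
  then have H_anti: "H x (S' f) = - H x f" for x f
    using anti by (simp add: H_def)
  have "history W t \<omega> = merge I {t} (history W (t - 1) \<omega>, V \<omega>)" for \<omega>
    using \<open>1 \<le> t\<close> by (auto simp: V_def history_def I_def merge_def fun_eq_iff)
  then have "(\<integral>\<omega>. indicator B (history W (t - 1) \<omega>) * h (history W t \<omega>) \<partial>M)
      = (\<integral>\<omega>. H (history W (t - 1) \<omega>) (V \<omega>) \<partial>M)"
    by (simp add: H_def)
  also have "\<dots> = 0"
    by (rule integral_indep_antisymmetric_eq_0[where H=H, OF ind S'_meas law_V H_meas H_anti])
  finally show ?thesis .
qed

lemma real_cond_exp_antisymmetric_eq_0:
  fixes W :: "nat \<Rightarrow> 'a \<Rightarrow> 'b::topological_space" and h :: "(nat \<Rightarrow> 'b) \<Rightarrow> real"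
  assumes "prob_space M" and indep: "prob_space.indep_vars M (\<lambda>_. borel) W {1..}" and "1 \<le> t"
    and S: "S \<in> borel \<rightarrow>\<^sub>M borel" and law: "distr M borel (\<lambda>\<omega>. S (W t \<omega>)) = distr M borel (W t)"
    and h: "h \<in> borel_measurable (PiM {1..t} (\<lambda>_. borel))"
    and anti: "\<And>x. h (x(t := S (x t))) = - h x" and bounded: "\<And>x. \<bar>h x\<bar> \<le> C"
  shows "AE \<omega> in M. real_cond_exp M (filt M W (t - 1)) (\<lambda>\<omega>. h (history W t \<omega>)) \<omega> = 0"
proof -
  interpret prob_space M by fact
  have W_meas: "W s \<in> M \<rightarrow>\<^sub>M borel" if "1 \<le> s" for s
    using indep that by (auto simp: indep_vars_def)
  interpret sigma_finite_subalgebra M "filt M W (t - 1)"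
    by (intro sigma_finite_subalgebraI subalgebra_filt W_meas)
  have "(\<integral>\<omega>\<in>A. h (history W t \<omega>) \<partial>M) = 0" if A: "A \<in> sets (filt M W (t - 1))" for A
  proof -
    obtain B where B: "B \<in> sets (PiM {1..t - 1} (\<lambda>_. borel))" and A_eq: "A = history W (t - 1) -` B \<inter> space M"
      using filt_sets_vimage_history[OF W_meas A] by blast
    have "(\<integral>\<omega>\<in>A. h (history W t \<omega>) \<partial>M) = (\<integral>\<omega>. indicator B (history W (t - 1) \<omega>) * h (history W t \<omega>) \<partial>M)"
      unfolding set_lebesgue_integral_def A_eq
      by (intro Bochner_Integration.integral_cong) (auto simp: indicator_def)
    also have "\<dots> = 0"
      using integral_history_antisymmetric_eq_0[where W=W and t=t and S=S and h=h and B=B] indep \<open>1 \<le> t\<close> S law h anti B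
      by blast
    finally show ?thesis .
  qed
  moreover have "integrable M (\<lambda>\<omega>. h (history W t \<omega>))"
    using bounded W_meas
    by (intro integrable_const_bound[where B=C] measurable_compose[OF _ h])
       (auto simp: history_def intro!: measurable_restrict)
  ultimately show ?thesis
    by (intro real_cond_exp_charact) auto
qed

section \<open>Ville's inequality for betting on a fair game\<close>

lemma wealth_0: "wealth v k 0 = (\<lambda>_. 1)"
  by (simp add: fun_eq_iff)

definition stop_when :: "real \<Rightarrow> (nat \<Rightarrow> 'a \<Rightarrow> real) \<Rightarrow> (nat \<Rightarrow> 'a \<Rightarrow> real) \<Rightarrow> nat \<Rightarrow> 'a \<Rightarrow> real" where
  "stop_when c v k t \<omega> = (if \<exists>s\<in>{1..<t}. c \<le> wealth v k s \<omega> then 0 else v t \<omega>)"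

lemma wealth_stop_when_eq:
  "\<not> (\<exists>s\<in>{1..n}. c \<le> wealth v k s \<omega>) \<Longrightarrow> wealth (stop_when c v k) k n \<omega> = wealth v k n \<omega>"
  by (induction n) (auto simp: stop_when_def)

lemma wealth_stop_when_ge:
  "\<exists>s\<in>{1..n}. c \<le> wealth v k s \<omega> \<Longrightarrow> c \<le> wealth (stop_when c v k) k n \<omega>"
proof (induction n)
  case (Suc n)
  show ?case
  proof (cases "\<exists>s\<in>{1..n}. c \<le> wealth v k s \<omega>")
    case True
    then show ?thesis using Suc.IH by (simp add: stop_when_def atLeastLessThanSuc_atLeastAtMost)
  next
    case False
    then have "c \<le> wealth v k (Suc n) \<omega>"
      using Suc.prems by (metis atLeastAtMostSuc_conv atLeastAtMost_iff insert_iff le_SucE)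
    then show ?thesis
      using False wealth_stop_when_eq[OF False]
      by (simp add: stop_when_def[of _ _ _ "Suc n"] atLeastLessThanSuc_atLeastAtMost)
  qed
qed simp

locale fair_betting_game = prob_space M for M :: "'a measure" +
  fixes F :: "nat \<Rightarrow> 'a measure" and \<kappa> :: "nat \<Rightarrow> 'a \<Rightarrow> real"
  assumes subalgebra_F: "subalgebra M (F n)"
    and F_mono: "m \<le> n \<Longrightarrow> subalgebra (F n) (F m)"
    and payoff_adapted: "\<kappa> (Suc n) \<in> borel_measurable (F (Suc n))"
    and payoff_bounded: "\<bar>\<kappa> t \<omega>\<bar> \<le> 1"
    and payoff_fair: "AE \<omega> in M. real_cond_exp M (F n) (\<kappa> (Suc n)) \<omega> = 0"
begin

definition strategy :: "(nat \<Rightarrow> 'a \<Rightarrow> real) \<Rightarrow> bool" where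
  "strategy v \<longleftrightarrow> (\<forall>n. v (Suc n) \<in> borel_measurable (F n)) \<and> (\<forall>n. \<forall>\<omega>\<in>space M. \<bar>v (Suc n) \<omega>\<bar> \<le> 1)"

lemma space_F [simp]: "space (F n) = space M"
  using subalgebra_F by (simp add: subalgebra_def)

lemma measurable_from_F: "f \<in> borel_measurable (F n) \<Longrightarrow> f \<in> borel_measurable M"
  using measurable_from_subalg[OF subalgebra_F] .

lemma measurable_F_mono: "m \<le> n \<Longrightarrow> f \<in> borel_measurable (F m) \<Longrightarrow> f \<in> borel_measurable (F n)"
  using measurable_from_subalg[OF F_mono] .

lemma integrable_mult_payoff:
  assumes g: "g \<in> borel_measurable (F n)" and bounded: "\<And>\<omega>. \<omega> \<in> space M \<Longrightarrow> \<bar>g \<omega>\<bar> \<le> C"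
  shows "integrable M (\<lambda>\<omega>. g \<omega> * \<kappa> (Suc n) \<omega>)"
proof (rule integrable_const_bound[where B=C])
  show "AE \<omega> in M. norm (g \<omega> * \<kappa> (Suc n) \<omega>) \<le> C"
  proof (rule AE_I2)
    fix \<omega> assume "\<omega> \<in> space M"
    have "\<bar>g \<omega>\<bar> * \<bar>\<kappa> (Suc n) \<omega>\<bar> \<le> \<bar>g \<omega>\<bar>"
      using mult_left_mono[OF payoff_bounded abs_ge_zero] by simp
    then show "norm (g \<omega> * \<kappa> (Suc n) \<omega>) \<le> C"
      using bounded[OF \<open>\<omega> \<in> space M\<close>] by (simp add: abs_mult)
  qed
qed (intro borel_measurable_times measurable_from_F[OF g] measurable_from_F[OF payoff_adapted])

lemma integral_mult_payoff_eq_0: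
  assumes g: "g \<in> borel_measurable (F n)" and bounded: "\<And>\<omega>. \<omega> \<in> space M \<Longrightarrow> \<bar>g \<omega>\<bar> \<le> C"
  shows "(\<integral>\<omega>. g \<omega> * \<kappa> (Suc n) \<omega> \<partial>M) = 0"
proof -
  interpret sigma_finite_subalgebra M "F n"
    by (rule sigma_finite_subalgebraI[OF subalgebra_F])
  have "(\<integral>\<omega>. g \<omega> * \<kappa> (Suc n) \<omega> \<partial>M) = (\<integral>\<omega>. g \<omega> * real_cond_exp M (F n) (\<kappa> (Suc n)) \<omega> \<partial>M)"
    by (rule real_cond_exp_intg(2)[OF integrable_mult_payoff[OF g bounded] g
          measurable_from_F[OF payoff_adapted], symmetric])
  also have "\<dots> = 0"
    using payoff_fair[of n] measurable_from_F[OF g]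
    by (subst integral_cong_AE[where g="\<lambda>_. 0"]) (auto intro!: borel_measurable_times borel_measurable_cond_exp2)
  finally show ?thesis .
qed

lemma strategy_bounded: "strategy v \<Longrightarrow> \<omega> \<in> space M \<Longrightarrow> \<bar>v (Suc n) \<omega> * \<kappa> (Suc n) \<omega>\<bar> \<le> 1"
  unfolding strategy_def abs_mult using payoff_bounded by (intro mult_le_one) auto

lemma wealth_measurable: "strategy v \<Longrightarrow> wealth v \<kappa> n \<in> borel_measurable (F n)"
proof (induction n)
  case (Suc n)
  have "v (Suc n) \<in> borel_measurable (F n)" using Suc.prems by (simp add: strategy_def)
  with Suc show ?case
    by (simp, intro borel_measurable_times borel_measurable_add borel_measurable_const payoff_adapted
        measurable_F_mono[of n "Suc n"]) auto
qed (simp add: wealth_0)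

lemma wealth_bounds:
  assumes "strategy v" "\<omega> \<in> space M"
  shows "0 \<le> wealth v \<kappa> n \<omega> \<and> wealth v \<kappa> n \<omega> \<le> 2 ^ n"
proof (induction n)
  case (Suc n)
  have "0 \<le> 1 + v (Suc n) \<omega> * \<kappa> (Suc n) \<omega>" "1 + v (Suc n) \<omega> * \<kappa> (Suc n) \<omega> \<le> 2"
    using strategy_bounded[OF assms, of n] by auto
  moreover have "wealth v \<kappa> n \<omega> * (1 + v (Suc n) \<omega> * \<kappa> (Suc n) \<omega>) \<le> 2 ^ n * 2"
    using Suc calculation by (intro mult_mono) auto
  ultimately show ?case using Suc by (simp add: mult.commute)
qed (simp add: wealth_0)

lemma integrable_wealth: "strategy v \<Longrightarrow> integrable M (wealth v \<kappa> n)"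
  using wealth_bounds
  by (intro integrable_const_bound[where B="2 ^ n"] measurable_from_F[OF wealth_measurable]) auto

lemma integral_wealth: "strategy v \<Longrightarrow> (\<integral>\<omega>. wealth v \<kappa> n \<omega> \<partial>M) = 1"
proof (induction n)
  case (Suc n)
  define g where "g \<omega> = wealth v \<kappa> n \<omega> * v (Suc n) \<omega>" for \<omega>
  have g: "g \<in> borel_measurable (F n)"
    using Suc.prems wealth_measurable unfolding g_def strategy_def by (intro borel_measurable_times) auto
  have g_bounded: "\<bar>g \<omega>\<bar> \<le> 2 ^ n" if "\<omega> \<in> space M" for \<omega>
  proof -
    have "\<bar>v (Suc n) \<omega>\<bar> \<le> 1" using Suc.prems that by (simp add: strategy_def)
    then have "\<bar>wealth v \<kappa> n \<omega>\<bar> * \<bar>v (Suc n) \<omega>\<bar> \<le> 2 ^ n * 1"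
      using wealth_bounds[OF Suc.prems that, of n] by (intro mult_mono) auto
    then show ?thesis by (simp add: g_def abs_mult)
  qed
  have "(\<integral>\<omega>. wealth v \<kappa> (Suc n) \<omega> \<partial>M) = (\<integral>\<omega>. wealth v \<kappa> n \<omega> \<partial>M) + (\<integral>\<omega>. g \<omega> * \<kappa> (Suc n) \<omega> \<partial>M)"
    using integrable_wealth[OF Suc.prems] integrable_mult_payoff[OF g g_bounded]
    by (simp add: g_def algebra_simps)
  then show ?case
    using Suc integral_mult_payoff_eq_0[OF g g_bounded] by simp
qed (simp add: wealth_0 prob_space)

lemma crossing_sets:
  assumes "strategy v"
  shows "{\<omega>\<in>space M. \<exists>s\<in>{1..n}. c \<le> wealth v \<kappa> s \<omega>} \<in> sets (F n)"
proof -
  have "{\<omega>\<in>space (F n). c \<le> wealth v \<kappa> s \<omega>} \<in> sets (F n)" if "s \<in> {1..n}" for s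
    using that borel_measurable_le[OF borel_measurable_const measurable_F_mono[OF _ wealth_measurable[OF assms], of s n]]
    by simp
  then have "{\<omega>\<in>space (F n). \<exists>s\<in>{1..n}. c \<le> wealth v \<kappa> s \<omega>} \<in> sets (F n)"
    by (intro sets.sets_Collect_finite_Ex) auto
  then show ?thesis by simp
qed

lemma strategy_stop_when:
  assumes "strategy v" shows "strategy (stop_when c v \<kappa>)"
  unfolding strategy_def
proof safe
  fix n
  have "(\<lambda>\<omega>. if \<exists>s\<in>{1..n}. c \<le> wealth v \<kappa> s \<omega> then 0 else v (Suc n) \<omega>) \<in> borel_measurable (F n)"
    using assms crossing_sets[OF assms] by (intro measurable_If) (auto simp: strategy_def)
  then show "stop_when c v \<kappa> (Suc n) \<in> borel_measurable (F n)"
    by (simp add: stop_when_def[abs_def] atLeastLessThanSuc_atLeastAtMost)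
  fix \<omega> assume "\<omega> \<in> space M"
  then show "\<bar>stop_when c v \<kappa> (Suc n) \<omega>\<bar> \<le> 1"
    using assms by (simp add: stop_when_def strategy_def)
qed

theorem ville_wealth:
  assumes v: "strategy v" and "0 < \<alpha>"
  shows "measure M {\<omega>\<in>space M. \<exists>t\<ge>1. 1 / \<alpha> \<le> wealth v \<kappa> t \<omega>} \<le> \<alpha>"
proof -
  define c where "c = 1 / \<alpha>"
  define D where "D n = {\<omega>\<in>space M. \<exists>s\<in>{1..n}. c \<le> wealth v \<kappa> s \<omega>}" for n
  have D_sets: "D n \<in> sets M" for n
    using crossing_sets[OF v] subalgebra_F unfolding D_def subalgebra_def by blast
  have "c * measure M (D n) \<le> 1" for n
  proof -
    let ?w = "stop_when c v \<kappa>"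
    have "c * measure M (D n) = (\<integral>\<omega>. c * indicator (D n) \<omega> \<partial>M)"
      using D_sets by simp
    also have "\<dots> \<le> (\<integral>\<omega>. wealth ?w \<kappa> n \<omega> \<partial>M)"
    proof (rule integral_mono)
      show "integrable M (\<lambda>\<omega>. c * indicator (D n) \<omega>)"
        using D_sets by (intro integrable_mult_right integrable_real_indicator) (auto simp: less_top[symmetric])
      show "integrable M (wealth ?w \<kappa> n)"
        by (intro integrable_wealth strategy_stop_when v)
      fix \<omega> assume "\<omega> \<in> space M"
      then show "c * indicator (D n) \<omega> \<le> wealth ?w \<kappa> n \<omega>"
        using wealth_bounds[OF strategy_stop_when[OF v]] wealth_stop_when_ge[of n c v \<kappa> \<omega>]
        by (auto simp: D_def indicator_def)
    qed
    also have "\<dots> = 1"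
      by (rule integral_wealth[OF strategy_stop_when[OF v]])
    finally show ?thesis .
  qed
  then have D_measure: "measure M (D n) \<le> \<alpha>" for n
    using \<open>0 < \<alpha>\<close> by (simp add: c_def field_simps)
  have "(\<lambda>n. measure M (D n)) \<longlonglongrightarrow> measure M (\<Union>n. D n)"
    using D_sets by (intro finite_Lim_measure_incseq) (auto simp: incseq_def D_def)
  then have "measure M (\<Union>n. D n) \<le> \<alpha>"
    using D_measure by (intro LIMSEQ_le_const2) auto
  moreover have "(\<Union>n. D n) = {\<omega>\<in>space M. \<exists>t\<ge>1. 1 / \<alpha> \<le> wealth v \<kappa> t \<omega>}"
    unfolding D_def c_def by fastforce
  ultimately show ?thesis by simp
qed

end

section \<open>The payoff as a function of the observed path\<close>

lemma abs_kappa_le_1: "\<bar>kappa Y Zj Zm Zt kY kj km t \<omega>\<bar> \<le> 1"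
  using tanh_real_bounds by (auto simp: kappa_def abs_le_iff less_imp_le)

lemma rho_cong:
  assumes "\<And>s. s \<in> {1..t - 1} \<Longrightarrow>
    Y s \<omega> = Y' s \<omega>' \<and> Zj s \<omega> = Zj' s \<omega>' \<and> Zm s \<omega> = Zm' s \<omega>' \<and> Zt s \<omega> = Zt' s \<omega>'"
  shows "rho Y Zj Zm Zt kY kj km t \<omega> = rho Y' Zj' Zm' Zt' kY kj km t \<omega>'"
  using assms by (auto simp: rho_def fun_eq_iff intro!: sum.cong)

definition path_kappa ::
  "(real \<Rightarrow> real \<Rightarrow> real) \<Rightarrow> (real \<Rightarrow> real \<Rightarrow> real) \<Rightarrow> ('z \<Rightarrow> 'z \<Rightarrow> real) \<Rightarrow>
   nat \<Rightarrow> (nat \<Rightarrow> real \<times> real \<times> 'z \<times> real) \<Rightarrow> real" where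
  "path_kappa kY kj km =
     kappa (\<lambda>s x. fst (x s)) (\<lambda>s x. fst (snd (x s))) (\<lambda>s x. fst (snd (snd (x s)))) (\<lambda>s x. snd (snd (snd (x s))))
       kY kj km"

lemma kappa_eq_path_kappa:
  "kappa Y Zj Zm Zt kY kj km t \<omega> =
     path_kappa kY kj km t (history (\<lambda>t \<omega>. (Y t \<omega>, Zj t \<omega>, Zm t \<omega>, Zt t \<omega>)) t \<omega>)"
proof (cases "t = 0")
  case False
  let ?x = "history (\<lambda>t \<omega>. (Y t \<omega>, Zj t \<omega>, Zm t \<omega>, Zt t \<omega>)) t \<omega>"
  have "rho (\<lambda>s x. fst (x s)) (\<lambda>s x. fst (snd (x s))) (\<lambda>s x. fst (snd (snd (x s))))
          (\<lambda>s x. snd (snd (snd (x s)))) kY kj km t ?x = rho Y Zj Zm Zt kY kj km t \<omega>"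
    by (intro ext rho_cong) (auto simp: history_def)
  moreover have "?x t = (Y t \<omega>, Zj t \<omega>, Zm t \<omega>, Zt t \<omega>)"
    using False by (simp add: history_def)
  ultimately show ?thesis by (simp add: path_kappa_def kappa_def)
qed (simp add: path_kappa_def kappa_def rho_def)

lemma abs_path_kappa_le_1: "\<bar>path_kappa kY kj km t x\<bar> \<le> 1"
  unfolding path_kappa_def by (rule abs_kappa_le_1)

lemma path_kappa_swap_resampled:
  "path_kappa kY kj km t (x(t := swap_resampled (x t))) = - path_kappa kY kj km t x"
proof -
  have "rho (\<lambda>s x. fst (x s)) (\<lambda>s x. fst (snd (x s))) (\<lambda>s x. fst (snd (snd (x s))))
          (\<lambda>s x. snd (snd (snd (x s)))) kY kj km t (x(t := swap_resampled (x t)))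
      = rho (\<lambda>s x. fst (x s)) (\<lambda>s x. fst (snd (x s))) (\<lambda>s x. fst (snd (snd (x s))))
          (\<lambda>s x. snd (snd (snd (x s)))) kY kj km t x"
    by (intro ext rho_cong) auto
  then show ?thesis
    by (simp add: path_kappa_def kappa_def swap_resampled_def case_prod_beta' tanh_minus[symmetric])
qed

lemma borel_measurable_kernel:
  fixes k :: "'b::second_countable_topology \<Rightarrow> 'b \<Rightarrow> real"
  assumes "(\<lambda>(a, b). k a b) \<in> borel_measurable borel" "f \<in> borel_measurable N" "g \<in> borel_measurable N"
  shows "(\<lambda>x. k (f x) (g x)) \<in> borel_measurable N"
  using measurable_compose[OF measurable_Pair[OF assms(2,3)], of "\<lambda>(a, b). k a b"] assms(1)
  by (simp add: borel_prod)

lemma borel_measurable_component_continuous: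
  "i \<in> I \<Longrightarrow> continuous_on UNIV f \<Longrightarrow> (\<lambda>x. f (x i)) \<in> borel_measurable (PiM I (\<lambda>_. borel))"
  by (rule borel_measurable_continuous_on) auto

lemma path_kappa_measurable:
  fixes km :: "'z::second_countable_topology \<Rightarrow> 'z \<Rightarrow> real"
  assumes "(\<lambda>(a, b). kY a b) \<in> borel_measurable borel" "(\<lambda>(a, b). kj a b) \<in> borel_measurable borel"
    "(\<lambda>(a, b). km a b) \<in> borel_measurable borel"
  shows "path_kappa kY kj km t \<in> borel_measurable (PiM {1..t} (\<lambda>_. borel))"
proof (cases "t \<le> 1")
  case False
  then show ?thesis
    unfolding path_kappa_def kappa_def rho_def
    by (auto intro!: borel_measurable_continuous_on[where f=tanh] borel_measurable_diff borel_measurable_divide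
        borel_measurable_times borel_measurable_sum borel_measurable_kernel[OF assms(1)]
        borel_measurable_kernel[OF assms(2)] borel_measurable_kernel[OF assms(3)]
        borel_measurable_component_continuous continuous_intros)
qed (simp add: path_kappa_def kappa_def[abs_def] rho_def)

lemma fair_betting_game_path_kappa:
  fixes W :: "nat \<Rightarrow> 'a \<Rightarrow> real \<times> real \<times> 'z::second_countable_topology \<times> real"
    and P :: "(real \<times> real \<times> 'z) measure"
  assumes M: "prob_space M" and indep: "prob_space.indep_vars M (\<lambda>_. borel) W {1..}"
    and law: "\<And>t. 1 \<le> t \<Longrightarrow> distr M borel (W t) = resample_law P Kc"
    and sets_P: "sets P = sets borel" and Kc: "Kc \<in> borel \<rightarrow>\<^sub>M prob_algebra borel" and null: "H0_GC P Kc"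
    and kernels: "(\<lambda>(a, b). kY a b) \<in> borel_measurable borel" "(\<lambda>(a, b). kj a b) \<in> borel_measurable borel"
      "(\<lambda>(a, b). km a b) \<in> borel_measurable borel"
  shows "fair_betting_game M (filt M W) (\<lambda>t \<omega>. path_kappa kY kj km t (history W t \<omega>))"
proof -
  interpret prob_space M by (rule M)
  have W_meas: "W t \<in> M \<rightarrow>\<^sub>M borel" if "1 \<le> t" for t
    using indep that by (auto simp: indep_vars_def)
  have swap_law: "distr M borel (\<lambda>\<omega>. swap_resampled (W t \<omega>)) = distr M borel (W t)" if "1 \<le> t" for t
    using distr_distr[OF swap_resampled_measurable W_meas[OF that]] law[OF that]
      distr_resample_law_swap[OF sets_P Kc null]
    by (simp add: comp_def)
  show ?thesis
  proof
    show "subalgebra M (filt M W n)" for n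
      using subalgebra_filt[where M=M and W=W] W_meas by simp
    show "subalgebra (filt M W n) (filt M W m)" if "m \<le> n" for m n
      using subalgebra_filt_mono[where M=M and W=W and m=m and n=n] W_meas that by simp
    show "(\<lambda>\<omega>. path_kappa kY kj km (Suc n) (history W (Suc n) \<omega>)) \<in> borel_measurable (filt M W (Suc n))" for n
      by (rule measurable_compose[OF measurable_history_filt path_kappa_measurable[OF kernels]])
         (auto intro: W_meas)
    show "AE \<omega> in M. real_cond_exp M (filt M W n)
        (\<lambda>\<omega>. path_kappa kY kj km (Suc n) (history W (Suc n) \<omega>)) \<omega> = 0" for n
    proof -
      have "AE \<omega> in M. real_cond_exp M (filt M W (Suc n - 1))
          (\<lambda>\<omega>. path_kappa kY kj km (Suc n) (history W (Suc n) \<omega>)) \<omega> = 0"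
        using swap_law[of "Suc n"]
        by (intro real_cond_exp_antisymmetric_eq_0[where t="Suc n" and S=swap_resampled and C=1, OF M indep]
            swap_resampled_measurable path_kappa_measurable[OF kernels] path_kappa_swap_resampled abs_path_kappa_le_1)
           simp_all
      then show ?thesis by simp
    qed
  qed (rule abs_path_kappa_le_1)
qed

theorem proposition1:
  fixes M :: "'a measure"
    and Y Zj Zt :: "nat \<Rightarrow> 'a \<Rightarrow> real"
    and Zm :: "nat \<Rightarrow> 'a \<Rightarrow> (real ^ 'd)"
    and P :: "(real \<times> real \<times> (real ^ 'd)) measure"
    and Kc :: "(real ^ 'd) \<Rightarrow> real measure"
    and kY kj :: "real \<Rightarrow> real \<Rightarrow> real"
    and km :: "(real ^ 'd) \<Rightarrow> (real ^ 'd) \<Rightarrow> real"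
    and v :: "nat \<Rightarrow> 'a \<Rightarrow> real"
  defines "W \<equiv> (\<lambda>t \<omega>. (Y t \<omega>, Zj t \<omega>, Zm t \<omega>, Zt t \<omega>))"
    and "\<kappa> \<equiv> kappa Y Zj Zm Zt kY kj km"
    and "F \<equiv> filt M (\<lambda>t \<omega>. (Y t \<omega>, Zj t \<omega>, Zm t \<omega>, Zt t \<omega>))"
  assumes M: "prob_space M"
    and iid_indep: "prob_space.indep_vars M (\<lambda>_. borel) W {1..}"
    and iid_law: "\<And>t. t \<ge> 1 \<Longrightarrow> distr M borel (W t) = resample_law P Kc"
    and P: "prob_space P" "sets P = sets borel"
    and cond: "is_cond_distr P Kc"
    and kern: "pd_kernel kY" "pd_kernel kj" "pd_kernel km"
      "bounded_kernel kY" "bounded_kernel kj" "bounded_kernel km"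
      "(\<lambda>(a, b). kY a b) \<in> borel_measurable borel"
      "(\<lambda>(a, b). kj a b) \<in> borel_measurable borel"
      "(\<lambda>(a, b). km a b) \<in> borel_measurable borel"
    and v_meas: "\<And>t. t \<ge> 1 \<Longrightarrow> v t \<in> borel_measurable (F (t - 1))"
    and v_range: "\<And>t \<omega>. t \<ge> 1 \<Longrightarrow> \<omega> \<in> space M \<Longrightarrow> v t \<omega> \<in> {-1..1}"
    and null: "H0_GC P Kc"
  shows "(\<forall>t\<ge>1. AE \<omega> in M. real_cond_exp M (F (t - 1)) (\<kappa> t) \<omega> = 0) \<and>
         (\<forall>\<alpha>\<in>{0<..<1}. measure M {\<omega>\<in>space M. \<exists>t\<ge>1. wealth v \<kappa> t \<omega> \<ge> 1 / \<alpha>} \<le> \<alpha>)"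
proof -
  have \<kappa>: "\<kappa> = (\<lambda>t \<omega>. path_kappa kY kj km t (history W t \<omega>))"
    unfolding \<kappa>_def W_def by (simp add: fun_eq_iff kappa_eq_path_kappa)
  interpret fair_betting_game M F \<kappa>
    unfolding F_def \<kappa> W_def[symmetric]
    using cond unfolding is_cond_distr_def
    by (blast intro: fair_betting_game_path_kappa[OF M iid_indep iid_law P(2) _ null kern(7-9)])
  have "v (Suc n) \<in> borel_measurable (F n)" "\<omega> \<in> space M \<Longrightarrow> \<bar>v (Suc n) \<omega>\<bar> \<le> 1" for n \<omega>
    using v_meas[of "Suc n"] v_range[of "Suc n" \<omega>] by auto
  then have "strategy v" by (simp add: strategy_def)
  moreover have "AE \<omega> in M. real_cond_exp M (F (t - 1)) (\<kappa> t) \<omega> = 0" if "1 \<le> t" for t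
    using payoff_fair[of "t - 1"] that by simp
  ultimately show ?thesis
    using ville_wealth by auto
qed

end
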